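(* For all integers $m,n \geq 3$, the toroidal grid $C_m \Box C_n$ is not diametrical, i.e. $\Gamma_b(C_m \Box C_n) \neq \mathrm{diam}(C_m \Box C_n)$.
   Context: $C_k$ is the cycle on $k$ vertices and $\Box$ the Cartesian product of graphs. Let $G=(V,E)$ be a finite connected graph with distance $d(u,v)$, eccentricity $e(v)=\max_w d(v,w)$ and diameter $\mathrm{diam}(G)=\max_v e(v)$. A broadcast is a function $f: V\to\{0,\dots,\mathrm{diam}(G)\}$ with $f(v)\le e(v)$; its cost is $\sum_v f(v)$; it is dominating if every $u$ has some $v$ with $f(v)\ge 1$ and $d(u,v)\le f(v)$; a dominating broadcast is minimal if decreasing $f(v)$ for any $v$ with $f(v)>0$ destroys domination. $\Gamma_b(G)$ is the maximum cost of a minimal dominating broadcast, and $G$ is called diametrical if $\Gamma_b(G)=\mathrm{diam}(G)$. *)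

theory Defs
  imports Main
begin

definition is_walk :: "'a set \<Rightarrow> ('a \<Rightarrow> 'a \<Rightarrow> bool) \<Rightarrow> 'a list \<Rightarrow> bool" where
  "is_walk V E xs \<longleftrightarrow> xs \<noteq> [] \<and> set xs \<subseteq> V \<and>
     (\<forall>i. Suc i < length xs \<longrightarrow> E (xs ! i) (xs ! Suc i))"

definition gdist :: "'a set \<Rightarrow> ('a \<Rightarrow> 'a \<Rightarrow> bool) \<Rightarrow> 'a \<Rightarrow> 'a \<Rightarrow> nat" where
  "gdist V E u v = (LEAST k. \<exists>xs. is_walk V E xs \<and> hd xs = u \<and> last xs = v \<and> length xs = Suc k)"

definition ecc :: "'a set \<Rightarrow> ('a \<Rightarrow> 'a \<Rightarrow> bool) \<Rightarrow> 'a \<Rightarrow> nat" where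
  "ecc V E v = Max ((\<lambda>w. gdist V E v w) ` V)"

definition diam :: "'a set \<Rightarrow> ('a \<Rightarrow> 'a \<Rightarrow> bool) \<Rightarrow> nat" where
  "diam V E = Max (ecc V E ` V)"

definition is_broadcast :: "'a set \<Rightarrow> ('a \<Rightarrow> 'a \<Rightarrow> bool) \<Rightarrow> ('a \<Rightarrow> nat) \<Rightarrow> bool" where
  "is_broadcast V E f \<longleftrightarrow> (\<forall>v\<in>V. f v \<le> ecc V E v) \<and> (\<forall>v. v \<notin> V \<longrightarrow> f v = 0)"

definition bcost :: "'a set \<Rightarrow> ('a \<Rightarrow> nat) \<Rightarrow> nat" where
  "bcost V f = (\<Sum>v\<in>V. f v)"

definition dominating :: "'a set \<Rightarrow> ('a \<Rightarrow> 'a \<Rightarrow> bool) \<Rightarrow> ('a \<Rightarrow> nat) \<Rightarrow> bool" where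
  "dominating V E f \<longleftrightarrow> (\<forall>u\<in>V. \<exists>v\<in>V. f v \<ge> 1 \<and> gdist V E u v \<le> f v)"

definition minimal_dominating :: "'a set \<Rightarrow> ('a \<Rightarrow> 'a \<Rightarrow> bool) \<Rightarrow> ('a \<Rightarrow> nat) \<Rightarrow> bool" where
  "minimal_dominating V E f \<longleftrightarrow> is_broadcast V E f \<and> dominating V E f \<and>
     (\<forall>v\<in>V. \<forall>k. f v > 0 \<longrightarrow> k < f v \<longrightarrow> \<not> dominating V E (f(v := k)))"

definition upper_broadcast_number :: "'a set \<Rightarrow> ('a \<Rightarrow> 'a \<Rightarrow> bool) \<Rightarrow> nat" where
  "upper_broadcast_number V E = Max {bcost V f | f. minimal_dominating V E f}"

definition cycleV :: "nat \<Rightarrow> nat set" where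
  "cycleV k = {0..<k}"

definition cycleE :: "nat \<Rightarrow> nat \<Rightarrow> nat \<Rightarrow> bool" where
  "cycleE k i j \<longleftrightarrow> i < k \<and> j < k \<and> (j = Suc i mod k \<or> i = Suc j mod k)"

definition prodV :: "'a set \<Rightarrow> 'b set \<Rightarrow> ('a \<times> 'b) set" where
  "prodV V1 V2 = V1 \<times> V2"

definition prodE :: "('a \<Rightarrow> 'a \<Rightarrow> bool) \<Rightarrow> ('b \<Rightarrow> 'b \<Rightarrow> bool) \<Rightarrow> ('a \<times> 'b) \<Rightarrow> ('a \<times> 'b) \<Rightarrow> bool" where
  "prodE E1 E2 x y \<longleftrightarrow> (fst x = fst y \<and> E2 (snd x) (snd y)) \<or> (snd x = snd y \<and> E1 (fst x) (fst y))"

end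

theory Submission
  imports Defs
begin

text \<open>The diameter of \<open>C\<^sub>m \<box> C\<^sub>n\<close> is at most \<open>\<lfloor>m/2\<rfloor> + \<lfloor>n/2\<rfloor>\<close>, since each coordinate can be
  walked around its cycle in the shorter direction. On the other hand, the indicator function
  of any maximal independent set is a minimal dominating broadcast, whose cost is the size of
  the set. The checkerboard on \<open>[0,2\<lfloor>m/2\<rfloor>) \<times> [0,2\<lfloor>n/2\<rfloor>)\<close> (together with the corner
  \<open>(m-1,n-1)\<close> when \<open>m\<close> and \<open>n\<close> are both odd) is independent and has more than
  \<open>\<lfloor>m/2\<rfloor> + \<lfloor>n/2\<rfloor>\<close> vertices; extending it to a maximal independent set gives
  \<open>\<Gamma>\<^sub>b > diam\<close>.\<close>

definition has_walk :: "'a set \<Rightarrow> ('a \<Rightarrow> 'a \<Rightarrow> bool) \<Rightarrow> 'a \<Rightarrow> 'a \<Rightarrow> nat \<Rightarrow> bool" where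
  "has_walk V E u v d \<longleftrightarrow> (\<exists>xs. is_walk V E xs \<and> hd xs = u \<and> last xs = v \<and> length xs = Suc d)"

lemma is_walk_Cons:
  "is_walk V E (x # xs) \<longleftrightarrow> x \<in> V \<and> (xs = [] \<or> E x (hd xs) \<and> is_walk V E xs)"
proof (cases xs)
  case (Cons y ys)
  have "(\<forall>i. Suc i < length (x # xs) \<longrightarrow> E ((x # xs) ! i) ((x # xs) ! Suc i)) \<longleftrightarrow>
        E x y \<and> (\<forall>i. Suc i < length xs \<longrightarrow> E (xs ! i) (xs ! Suc i))"
    using Cons by (auto simp: All_less_Suc2 simp del: length_Cons)
  then show ?thesis using Cons by (auto simp: is_walk_def)
qed (simp add: is_walk_def)

lemma is_walk_append_tl:
  assumes "is_walk V E xs" "is_walk V E ys" "last xs = hd ys"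
  shows "is_walk V E (xs @ tl ys)"
  using assms
proof (induction xs)
  case (Cons x xs)
  show ?case
  proof (cases "xs = []")
    case True
    then show ?thesis using Cons.prems by (cases ys) (auto simp: is_walk_def)
  next
    case False
    then show ?thesis using Cons by (simp add: is_walk_Cons)
  qed
qed (simp add: is_walk_def)

lemma has_walk_refl: "u \<in> V \<Longrightarrow> has_walk V E u u 0"
  unfolding has_walk_def by (rule exI[of _ "[u]"]) (simp add: is_walk_def)

lemma has_walk_edge: "u \<in> V \<Longrightarrow> v \<in> V \<Longrightarrow> E u v \<Longrightarrow> has_walk V E u v 1"
  unfolding has_walk_def by (rule exI[of _ "[u, v]"]) (simp add: is_walk_Cons)

lemma has_walk_in_vertices:
  assumes "has_walk V E u v d"
  shows "u \<in> V" "v \<in> V"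
  using assms unfolding has_walk_def is_walk_def by (auto dest: hd_in_set last_in_set)

lemma has_walk_trans:
  assumes "has_walk V E u v d" "has_walk V E v w e"
  shows "has_walk V E u w (d + e)"
proof -
  obtain xs where xs: "is_walk V E xs" "hd xs = u" "last xs = v" "length xs = Suc d"
    using assms(1) unfolding has_walk_def by blast
  obtain ys where ys: "is_walk V E ys" "hd ys = v" "last ys = w" "length ys = Suc e"
    using assms(2) unfolding has_walk_def by blast
  have "last (xs @ tl ys) = w"
    using xs ys by (cases ys) (auto simp: last_append)
  moreover have "hd (xs @ tl ys) = u" "length (xs @ tl ys) = Suc (d + e)"
    using xs ys by (cases xs; auto)+
  moreover have "is_walk V E (xs @ tl ys)"
    using is_walk_append_tl[OF xs(1) ys(1)] xs(3) ys(2) by simp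
  ultimately show ?thesis unfolding has_walk_def by blast
qed

lemma has_walk_sym:
  assumes "symp E" "has_walk V E u v d"
  shows "has_walk V E v u d"
proof -
  obtain xs where xs: "is_walk V E xs" "hd xs = u" "last xs = v" "length xs = Suc d"
    using assms(2) unfolding has_walk_def by blast
  have "E (rev xs ! i) (rev xs ! Suc i)" if "Suc i < length xs" for i
  proof -
    have "E (xs ! (length xs - Suc (Suc i))) (xs ! Suc (length xs - Suc (Suc i)))"
      using xs(1) that unfolding is_walk_def by simp
    then show ?thesis
      using that \<open>symp E\<close> by (simp add: rev_nth Suc_diff_Suc symp_def)
  qed
  then have "is_walk V E (rev xs)" using xs(1) unfolding is_walk_def by simp
  moreover have "xs \<noteq> []" using xs(4) by auto
  ultimately show ?thesis
    unfolding has_walk_def using xs by (intro exI[of _ "rev xs"]) (simp add: hd_rev last_rev)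
qed

lemma has_walk_map:
  assumes "has_walk V E u v d" "g ` V \<subseteq> V'" "\<And>x y. E x y \<Longrightarrow> E' (g x) (g y)"
  shows "has_walk V' E' (g u) (g v) d"
proof -
  obtain xs where xs: "is_walk V E xs" "hd xs = u" "last xs = v" "length xs = Suc d"
    using assms(1) unfolding has_walk_def by blast
  have "is_walk V' E' (map g xs)"
    using xs(1) assms(2,3) unfolding is_walk_def by (simp; blast)
  moreover have "xs \<noteq> []" using xs(4) by auto
  ultimately show ?thesis
    unfolding has_walk_def using xs by (intro exI[of _ "map g xs"]) (simp add: hd_map last_map)
qed

lemma gdist_le: "has_walk V E u v d \<Longrightarrow> gdist V E u v \<le> d"
  unfolding gdist_def has_walk_def by (auto intro: Least_le)

lemma has_walk_gdist: "has_walk V E u v d \<Longrightarrow> has_walk V E u v (gdist V E u v)"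
  unfolding gdist_def has_walk_def by (rule LeastI_ex) blast

lemma has_walk_0: "has_walk V E u v 0 \<Longrightarrow> u = v"
  unfolding has_walk_def by (auto simp: length_Suc_conv)

lemma has_walk_1: "has_walk V E u v 1 \<Longrightarrow> E u v"
  unfolding has_walk_def by (auto simp: length_Suc_conv is_walk_Cons)

definition connected_graph :: "'a set \<Rightarrow> ('a \<Rightarrow> 'a \<Rightarrow> bool) \<Rightarrow> bool" where
  "connected_graph V E \<longleftrightarrow> (\<forall>u\<in>V. \<forall>v\<in>V. \<exists>d. has_walk V E u v d)"

text \<open>Connectivity matters here: without a walk, \<^const>\<open>gdist\<close> is an unspecified \<open>LEAST\<close> value.\<close>

lemma gdist_le_1_imp_adjacent:
  assumes "connected_graph V E" "u \<in> V" "v \<in> V" "gdist V E u v \<le> 1"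
  shows "u = v \<or> E u v"
proof -
  obtain d where "has_walk V E u v d" using assms(1-3) unfolding connected_graph_def by blast
  then have walk: "has_walk V E u v (gdist V E u v)" by (rule has_walk_gdist)
  show ?thesis
    using assms(4) walk has_walk_0 has_walk_1 le_Suc_eq by (metis One_nat_def le_zero_eq)
qed

lemma gdist_le_ecc: "finite V \<Longrightarrow> w \<in> V \<Longrightarrow> gdist V E v w \<le> ecc V E v"
  unfolding ecc_def by (rule Max_ge) auto

lemma ecc_ge_1:
  assumes "finite V" "connected_graph V E" "v \<in> V" "w \<in> V" "w \<noteq> v"
  shows "1 \<le> ecc V E v"
proof -
  obtain d where "has_walk V E v w d" using assms(2-4) unfolding connected_graph_def by blast
  then have "gdist V E v w \<noteq> 0" using has_walk_gdist has_walk_0 assms(5) by metis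
  then show ?thesis using gdist_le_ecc[OF assms(1,4), of E v] by linarith
qed

lemma diam_le:
  assumes "finite V" "V \<noteq> {}" "\<And>u v. u \<in> V \<Longrightarrow> v \<in> V \<Longrightarrow> \<exists>d \<le> D. has_walk V E u v d"
  shows "diam V E \<le> D"
proof -
  have "gdist V E u v \<le> D" if uv: "u \<in> V" "v \<in> V" for u v
  proof -
    obtain d where "d \<le> D" "has_walk V E u v d" using assms(3)[OF uv] by blast
    then show ?thesis using gdist_le[of V E u v d] by linarith
  qed
  then show ?thesis using assms(1,2) unfolding diam_def ecc_def by (simp add: Max_le_iff)
qed

lemma bcost_le_upper_broadcast_number:
  assumes "finite V" "minimal_dominating V E f"
  shows "bcost V f \<le> upper_broadcast_number V E"
proof -
  let ?costs = "{bcost V g | g. minimal_dominating V E g}"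
  have "?costs \<subseteq> {..(\<Sum>v\<in>V. ecc V E v)}"
    unfolding bcost_def minimal_dominating_def is_broadcast_def by (auto intro: sum_mono)
  then have "finite ?costs" by (rule finite_subset) simp
  then show ?thesis
    unfolding upper_broadcast_number_def using assms(2) by (auto intro: Max_ge)
qed

definition independent :: "('a \<Rightarrow> 'a \<Rightarrow> bool) \<Rightarrow> 'a set \<Rightarrow> bool" where
  "independent E S \<longleftrightarrow> (\<forall>x\<in>S. \<forall>y\<in>S. \<not> E x y)"

definition independent_dominating :: "'a set \<Rightarrow> ('a \<Rightarrow> 'a \<Rightarrow> bool) \<Rightarrow> 'a set \<Rightarrow> bool" where
  "independent_dominating V E T \<longleftrightarrow>
     T \<subseteq> V \<and> independent E T \<and> (\<forall>u\<in>V. u \<in> T \<or> (\<exists>t\<in>T. E u t))"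

lemma ex_independent_dominating_superset:
  assumes "finite V" "symp E" "irreflp E" "S \<subseteq> V" "independent E S"
  shows "\<exists>T. S \<subseteq> T \<and> independent_dominating V E T"
  using assms(4,5)
proof (induction "card (V - S)" arbitrary: S rule: less_induct)
  case less
  show ?case
  proof (cases "\<forall>u\<in>V. u \<in> S \<or> (\<exists>t\<in>S. E u t)")
    case True
    then show ?thesis using less.prems unfolding independent_dominating_def by blast
  next
    case False
    then obtain u where u: "u \<in> V" "u \<notin> S" "\<forall>t\<in>S. \<not> E u t" by blast
    have "independent E (insert u S)"
      using less.prems(2) u(3) assms(2,3)
      unfolding independent_def symp_def irreflp_def by blast
    moreover have "card (V - insert u S) < card (V - S)"
      using u(1,2) assms(1) by (intro psubset_card_mono) auto
    ultimately obtain T where "insert u S \<subseteq> T" "independent_dominating V E T"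
      using less.hyps less.prems(1) u(1) by blast
    then show ?thesis by blast
  qed
qed

lemma minimal_dominating_indicator:
  assumes "finite V" "connected_graph V E" "\<And>v. v \<in> V \<Longrightarrow> \<exists>w\<in>V. w \<noteq> v"
    and T: "independent_dominating V E T"
  shows "minimal_dominating V E (\<lambda>v. if v \<in> T then 1 else 0)" (is "minimal_dominating V E ?f")
  unfolding minimal_dominating_def
proof (intro conjI ballI allI impI)
  have T_sub: "T \<subseteq> V" and T_indep: "independent E T"
    and T_dom: "\<And>u. u \<in> V \<Longrightarrow> u \<in> T \<or> (\<exists>t\<in>T. E u t)"
    using T unfolding independent_dominating_def by blast+
  have "?f v \<le> ecc V E v" if v: "v \<in> V" for v
  proof -
    obtain w where "w \<in> V" "w \<noteq> v" using assms(3)[OF v] by blast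
    then show ?thesis using ecc_ge_1[OF assms(1,2) v] by simp
  qed
  then show "is_broadcast V E ?f"
    unfolding is_broadcast_def using T_sub by auto
  show "dominating V E ?f"
    unfolding dominating_def
  proof
    fix u assume u: "u \<in> V"
    obtain t where t: "t \<in> T" "gdist V E u t \<le> 1"
    proof (cases "u \<in> T")
      case True
      moreover have "gdist V E u u \<le> 1" using gdist_le[OF has_walk_refl[OF u]] by simp
      ultimately show ?thesis using that by blast
    next
      case False
      then obtain t where "t \<in> T" "E u t" using T_dom[OF u] by blast
      moreover have "t \<in> V" using \<open>t \<in> T\<close> T_sub by blast
      ultimately show ?thesis using that gdist_le[OF has_walk_edge[OF u]] by blast
    qed
    moreover have "t \<in> V" using t(1) T_sub by blast
    ultimately show "\<exists>t\<in>V. 1 \<le> ?f t \<and> gdist V E u t \<le> ?f t" by auto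
  qed
  fix v k assume v: "v \<in> V" and "0 < ?f v" "k < ?f v"
  then have "v \<in> T" "k = 0" by (auto split: if_splits)
  show "\<not> dominating V E (?f(v := k))"
  proof
    assume "dominating V E (?f(v := k))"
    then obtain w where "w \<in> V" "1 \<le> (?f(v := k)) w" "gdist V E v w \<le> (?f(v := k)) w"
      using v unfolding dominating_def by blast
    then have "w \<in> V" "w \<noteq> v" "w \<in> T" "gdist V E v w \<le> 1"
      using \<open>k = 0\<close> by (auto split: if_splits)
    then show False
      using gdist_le_1_imp_adjacent[OF assms(2) v] T_indep \<open>v \<in> T\<close>
      unfolding independent_def by blast
  qed
qed

lemma bcost_indicator: "finite V \<Longrightarrow> T \<subseteq> V \<Longrightarrow> bcost V (\<lambda>v. if v \<in> T then 1 else 0) = card T"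
  unfolding bcost_def by (simp add: sum.If_cases Int_absorb1)

lemma symp_prodE: "symp E1 \<Longrightarrow> symp E2 \<Longrightarrow> symp (prodE E1 E2)"
  unfolding symp_def prodE_def by metis

lemma irreflp_prodE: "irreflp E1 \<Longrightarrow> irreflp E2 \<Longrightarrow> irreflp (prodE E1 E2)"
  unfolding irreflp_def prodE_def by blast

lemma has_walk_prod:
  assumes "has_walk V1 E1 a c d1" "has_walk V2 E2 b e d2"
  shows "has_walk (prodV V1 V2) (prodE E1 E2) (a, b) (c, e) (d1 + d2)"
proof -
  have "b \<in> V2" "c \<in> V1" using assms has_walk_in_vertices by metis+
  have "has_walk (prodV V1 V2) (prodE E1 E2) (a, b) (c, b) d1"
    by (rule has_walk_map[OF assms(1)]) (use \<open>b \<in> V2\<close> in \<open>auto simp: prodV_def prodE_def\<close>)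
  moreover have "has_walk (prodV V1 V2) (prodE E1 E2) (c, b) (c, e) d2"
    by (rule has_walk_map[OF assms(2)]) (use \<open>c \<in> V1\<close> in \<open>auto simp: prodV_def prodE_def\<close>)
  ultimately show ?thesis by (rule has_walk_trans)
qed

lemma symp_cycleE: "symp (cycleE k)"
  unfolding symp_def cycleE_def by blast

lemma irreflp_cycleE:
  assumes "2 \<le> k"
  shows "irreflp (cycleE k)"
proof -
  have "i \<noteq> Suc i mod k" for i
  proof (cases "Suc i < k")
    case False
    show ?thesis
    proof
      assume i: "i = Suc i mod k"
      have "Suc i mod k < k" using assms by simp
      with i have "i < k" by simp
      with False have "Suc i = k" by simp
      with i assms show False by simp
    qed
  qed simp
  then show ?thesis unfolding irreflp_def cycleE_def by blast
qed

lemma has_walk_cycle_forward: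
  assumes "i < k"
  shows "has_walk (cycleV k) (cycleE k) i ((i + t) mod k) t"
proof (induction t)
  case 0
  then show ?case using assms by (auto intro: has_walk_refl simp: cycleV_def)
next
  case (Suc t)
  have "cycleE k ((i + t) mod k) ((i + Suc t) mod k)"
    using assms by (simp add: cycleE_def mod_Suc_eq)
  then have "has_walk (cycleV k) (cycleE k) ((i + t) mod k) ((i + Suc t) mod k) 1"
    using assms by (intro has_walk_edge) (simp_all add: cycleV_def)
  from has_walk_trans[OF Suc.IH this] show ?case by simp
qed

lemma cycle_has_short_walk_ordered:
  assumes "i \<le> j" "j < k"
  shows "\<exists>d \<le> k div 2. has_walk (cycleV k) (cycleE k) i j d"
proof (cases "j - i \<le> k div 2")
  case True
  then show ?thesis
    using has_walk_cycle_forward[of i k "j - i"] assms by auto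
next
  case False
  have "has_walk (cycleV k) (cycleE k) j ((j + (k - (j - i))) mod k) (k - (j - i))"
    using assms by (intro has_walk_cycle_forward) simp
  moreover have "(j + (k - (j - i))) mod k = i" using assms by simp
  ultimately have "has_walk (cycleV k) (cycleE k) i j (k - (j - i))"
    using has_walk_sym[OF symp_cycleE] by metis
  moreover have "k - (j - i) \<le> k div 2" using False by linarith
  ultimately show ?thesis by blast
qed

lemma cycle_has_short_walk:
  assumes "i < k" "j < k"
  shows "\<exists>d \<le> k div 2. has_walk (cycleV k) (cycleE k) i j d"
proof (cases "i \<le> j")
  case False
  then obtain d where "d \<le> k div 2" "has_walk (cycleV k) (cycleE k) j i d"
    using cycle_has_short_walk_ordered[of j i k] assms by auto
  then show ?thesis using has_walk_sym[OF symp_cycleE] by blast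
qed (use assms cycle_has_short_walk_ordered in blast)

lemma torus_has_short_walk:
  assumes "u \<in> prodV (cycleV m) (cycleV n)" "v \<in> prodV (cycleV m) (cycleV n)"
  shows "\<exists>d \<le> m div 2 + n div 2. has_walk (prodV (cycleV m) (cycleV n)) (prodE (cycleE m) (cycleE n)) u v d"
proof -
  obtain i j k l where uv: "u = (i, j)" "v = (k, l)" "i < m" "j < n" "k < m" "l < n"
    using assms by (auto simp: prodV_def cycleV_def)
  obtain d1 where d1: "d1 \<le> m div 2" "has_walk (cycleV m) (cycleE m) i k d1"
    using cycle_has_short_walk uv(3,5) by blast
  obtain d2 where d2: "d2 \<le> n div 2" "has_walk (cycleV n) (cycleE n) j l d2"
    using cycle_has_short_walk uv(4,6) by blast
  have "d1 + d2 \<le> m div 2 + n div 2" using d1(1) d2(1) by simp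
  with has_walk_prod[OF d1(2) d2(2)] show ?thesis unfolding uv(1,2) by blast
qed

definition checkerboard :: "nat \<Rightarrow> nat \<Rightarrow> (nat \<times> nat) set" where
  "checkerboard a b = {(i, j). i < 2 * a \<and> j < 2 * b \<and> even (i + j)}"

lemma finite_checkerboard: "finite (checkerboard a b)"
  by (rule finite_subset[of _ "{..<2 * a} \<times> {..<2 * b}"]) (auto simp: checkerboard_def)

lemma card_checkerboard: "2 * a * b \<le> card (checkerboard a b)"
proof -
  let ?g = "\<lambda>(k, j). (2 * k + j mod 2, j)"
  have "inj_on ?g ({..<a} \<times> {..<2 * b})" by (auto simp: inj_on_def)
  moreover have "?g ` ({..<a} \<times> {..<2 * b}) \<subseteq> checkerboard a b"
  proof
    fix x assume "x \<in> ?g ` ({..<a} \<times> {..<2 * b})"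
    then obtain k j where x: "x = (2 * k + j mod 2, j)" "k < a" "j < 2 * b" by auto
    moreover have "j mod 2 < 2" by simp
    ultimately have "2 * k + j mod 2 < 2 * a" "even (2 * k + j mod 2 + j)" by presburger+
    then show "x \<in> checkerboard a b" using x unfolding checkerboard_def by simp
  qed
  moreover have "finite (checkerboard a b)" by (rule finite_checkerboard)
  ultimately have "card ({..<a} \<times> {..<2 * b}) \<le> card (checkerboard a b)"
    by (rule card_inj_on_le)
  then show ?thesis by (simp add: card_cartesian_product)
qed

text \<open>Away from the wrap-around edge of an odd cycle, adjacent vertices have opposite parity.\<close>

lemma cycleE_odd_sum:
  assumes "cycleE k i j" "i < 2 * (k div 2)" "j < 2 * (k div 2)"
  shows "odd (i + j)"
proof -
  have "odd (i + j)" if "j = Suc i mod k" "i < k" "i < 2 * (k div 2)" for i j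
  proof (cases "Suc i < k")
    case False
    then have "Suc i = k" using that(2) by simp
    then have "j = 0" "i < 2 * (Suc i div 2)" using that(1,3) by simp_all
    then show ?thesis by presburger
  qed (use that in simp)
  then show ?thesis using assms unfolding cycleE_def by (metis add.commute)
qed

definition torus_checkerboard :: "nat \<Rightarrow> nat \<Rightarrow> (nat \<times> nat) set" where
  "torus_checkerboard m n = checkerboard (m div 2) (n div 2) \<union> (if odd m \<and> odd n then {(m - 1, n - 1)} else {})"

lemma torus_checkerboard_subset: "torus_checkerboard m n \<subseteq> prodV (cycleV m) (cycleV n)"
  unfolding torus_checkerboard_def checkerboard_def prodV_def cycleV_def by (auto simp: odd_pos)

lemma independent_checkerboard:
  "independent (prodE (cycleE m) (cycleE n)) (checkerboard (m div 2) (n div 2))"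
  unfolding independent_def
proof (intro ballI notI)
  fix x y assume "x \<in> checkerboard (m div 2) (n div 2)" "y \<in> checkerboard (m div 2) (n div 2)"
    and adjacent: "prodE (cycleE m) (cycleE n) x y"
  then obtain i j k l where xy: "x = (i, j)" "y = (k, l)" "even (i + j)" "even (k + l)"
    "i < 2 * (m div 2)" "j < 2 * (n div 2)" "k < 2 * (m div 2)" "l < 2 * (n div 2)"
    unfolding checkerboard_def by auto
  have "odd (i + k + (j + l))"
    using adjacent cycleE_odd_sum xy unfolding prodE_def by auto
  then show False using xy(3,4) by presburger
qed

lemma independent_torus_checkerboard:
  assumes "2 \<le> m" "2 \<le> n"
  shows "independent (prodE (cycleE m) (cycleE n)) (torus_checkerboard m n)"
proof (cases "odd m \<and> odd n")
  case True
  let ?corner = "(m - 1, n - 1)"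
  have corner: "m - 1 = 2 * (m div 2)" "n - 1 = 2 * (n div 2)" using True by presburger+
  have "\<not> prodE (cycleE m) (cycleE n) ?corner y" "\<not> prodE (cycleE m) (cycleE n) y ?corner"
    if "y \<in> checkerboard (m div 2) (n div 2)" for y
    using that corner unfolding checkerboard_def prodE_def by auto
  moreover have "\<not> prodE (cycleE m) (cycleE n) ?corner ?corner"
    using irreflp_prodE[OF irreflp_cycleE irreflp_cycleE] assms by (simp add: irreflp_def)
  ultimately show ?thesis
    using independent_checkerboard[of m n] True unfolding independent_def torus_checkerboard_def by auto
next
  case False
  then show ?thesis using independent_checkerboard unfolding torus_checkerboard_def if_not_P[OF False] by simp
qed

lemma card_torus_checkerboard:
  assumes "3 \<le> m" "3 \<le> n"
  shows "m div 2 + n div 2 < card (torus_checkerboard m n)"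
proof -
  define a b where "a = m div 2" and "b = n div 2"
  have "1 \<le> a" "1 \<le> b" using assms unfolding a_def b_def by simp_all
  then have "a \<le> a * b" "b \<le> a * b" by simp_all
  have checker: "2 * a * b \<le> card (checkerboard a b)" by (rule card_checkerboard)
  show ?thesis
  proof (cases "odd m \<and> odd n")
    case True
    then have "\<not> m - 1 < 2 * a" unfolding a_def by presburger
    then have "(m - 1, n - 1) \<notin> checkerboard a b" unfolding checkerboard_def by simp
    then have "card (torus_checkerboard m n) = card (checkerboard a b) + 1"
      using True finite_checkerboard unfolding torus_checkerboard_def a_def b_def by simp
    then show ?thesis using checker \<open>a \<le> a * b\<close> \<open>b \<le> a * b\<close> unfolding a_def b_def by linarith
  next
    case False
    have "2 \<le> a \<or> 2 \<le> b"
    proof (rule ccontr)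
      assume "\<not> (2 \<le> a \<or> 2 \<le> b)"
      then have "m = 3" "n = 3" using assms unfolding a_def b_def by auto
      with False show False by simp
    qed
    moreover have "2 \<le> a \<Longrightarrow> 2 * b \<le> a * b" "2 \<le> b \<Longrightarrow> 2 * a \<le> a * b" by simp_all
    ultimately have "a + b < 2 * a * b"
      using \<open>1 \<le> a\<close> \<open>1 \<le> b\<close> \<open>a \<le> a * b\<close> \<open>b \<le> a * b\<close> by linarith
    moreover have "card (torus_checkerboard m n) = card (checkerboard a b)"
      unfolding torus_checkerboard_def if_not_P[OF False] a_def b_def by simp
    ultimately show ?thesis using checker unfolding a_def b_def by linarith
  qed
qed

lemma diam_torus_le:
  assumes "1 \<le> m" "1 \<le> n"
  shows "diam (prodV (cycleV m) (cycleV n)) (prodE (cycleE m) (cycleE n)) \<le> m div 2 + n div 2"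
proof (rule diam_le)
  show "finite (prodV (cycleV m) (cycleV n))" by (simp add: prodV_def cycleV_def)
  show "prodV (cycleV m) (cycleV n) \<noteq> {}" using assms by (auto simp: prodV_def cycleV_def)
qed (rule torus_has_short_walk)

lemma connected_graph_torus:
  "connected_graph (prodV (cycleV m) (cycleV n)) (prodE (cycleE m) (cycleE n))"
  unfolding connected_graph_def using torus_has_short_walk[of _ m n] by blast

theorem mainTheorem13:
  fixes m n :: nat
  assumes "m \<ge> 3" and "n \<ge> 3"
  shows "upper_broadcast_number (prodV (cycleV m) (cycleV n)) (prodE (cycleE m) (cycleE n))
         \<noteq> diam (prodV (cycleV m) (cycleV n)) (prodE (cycleE m) (cycleE n))"
proof -
  let ?V = "prodV (cycleV m) (cycleV n)" and ?E = "prodE (cycleE m) (cycleE n)"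
  have finite: "finite ?V" by (simp add: prodV_def cycleV_def)
  have "irreflp ?E" using assms by (intro irreflp_prodE irreflp_cycleE) simp_all
  moreover have "independent ?E (torus_checkerboard m n)"
    using assms by (intro independent_torus_checkerboard) simp_all
  ultimately obtain T where seed: "torus_checkerboard m n \<subseteq> T" and T: "independent_dominating ?V ?E T"
    using ex_independent_dominating_superset[OF finite symp_prodE[OF symp_cycleE symp_cycleE]
        _ torus_checkerboard_subset] by blast
  have "\<exists>w\<in>?V. w \<noteq> v" for v
    using assms by (intro bexI[of _ "if v = (0, 0) then (1, 0) else (0, 0)"]) (auto simp: prodV_def cycleV_def)
  then have "minimal_dominating ?V ?E (\<lambda>v. if v \<in> T then 1 else 0)"
    by (rule minimal_dominating_indicator[OF finite connected_graph_torus _ T])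
  then have "bcost ?V (\<lambda>v. if v \<in> T then 1 else 0) \<le> upper_broadcast_number ?V ?E"
    by (rule bcost_le_upper_broadcast_number[OF finite])
  moreover have "T \<subseteq> ?V" using T unfolding independent_dominating_def by blast
  ultimately have "card T \<le> upper_broadcast_number ?V ?E" using bcost_indicator[OF finite] by simp
  moreover have "card (torus_checkerboard m n) \<le> card T"
    by (rule card_mono[OF finite_subset[OF \<open>T \<subseteq> ?V\<close> finite] seed])
  moreover have "diam ?V ?E \<le> m div 2 + n div 2" using assms by (intro diam_torus_le) simp_all
  ultimately show ?thesis using card_torus_checkerboard[OF assms] by linarith
qed

end
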